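(* For each finite alphabet $\Sigma$, let $\mathcal{FV}(\Sigma)$ denote the class of regular languages $L\subseteq\Sigma^*$ having finite variation. Then $\mathcal{FV}$ is a $*$-variety of Eilenberg: for every finite alphabet $\Sigma$, $\mathcal{FV}(\Sigma)$ is closed under the boolean operations (union, intersection, complement in $\Sigma^*$), under left and right quotients by words ($L\mapsto u^{-1}L=\{x: ux\in L\}$ and $L\mapsto Lu^{-1}=\{x: xu\in L\}$ for $u\in\Sigma^*$), and for every monoid homomorphism $h:\Gamma^*\to\Sigma^*$ between free monoids over finite alphabets and every $L\in\mathcal{FV}(\Sigma)$, $h^{-1}(L)\in\mathcal{FV}(\Gamma)$.
   Context: Let $L\subseteq\Sigma^*$ be regular and let $\langle\Sigma,Q,\delta,q_0,F\rangle$ be the minimal deterministic automaton recognizing $L$; write $\delta(u)$ for the state reached from $q_0$ after reading $u\in\Sigma^*$. For $w=\sigma_1\cdots\sigma_n\in\Sigma^*$, its variation is $\mathrm{Var}_L(w)=\#\{0\le k<n : \delta(\sigma_1\cdots\sigma_k)\neq\delta(\sigma_1\cdots\sigma_{k+1})\}$. $L$ has finite variation iff $\sup_{x\in\Sigma^*}\mathrm{Var}_L(x)<\infty$. *)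

theory Defs
  imports Main
begin

text \<open>Alphabets are finite types 'a (Sigma = UNIV), words are lists, languages are word sets.\<close>

definition run :: "('s \<Rightarrow> 'a \<Rightarrow> 's) \<Rightarrow> 's \<Rightarrow> 'a list \<Rightarrow> 's" where
  "run delta q w = foldl delta q w"

definition regular :: "'a list set \<Rightarrow> bool" where
  "regular L \<longleftrightarrow> (\<exists>(Q::nat set) (delta :: nat \<Rightarrow> 'a \<Rightarrow> nat) q0 F.
     finite Q \<and> q0 \<in> Q \<and> (\<forall>q\<in>Q. \<forall>a. delta q a \<in> Q) \<and> F \<subseteq> Q \<and>
     L = {w. run delta q0 w \<in> F})"

text \<open>The minimal deterministic automaton of L (quotient / Nerode automaton): the state reached
  after reading u is the left quotient u^{-1}L.\<close>
definition min_state :: "'a list set \<Rightarrow> 'a list \<Rightarrow> 'a list set" where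
  "min_state L u = {x. u @ x \<in> L}"

definition Var :: "'a list set \<Rightarrow> 'a list \<Rightarrow> nat" where
  "Var L w = card {k. k < length w \<and> min_state L (take k w) \<noteq> min_state L (take (Suc k) w)}"

definition finite_variation :: "'a list set \<Rightarrow> bool" where
  "finite_variation L \<longleftrightarrow> (\<exists>B. \<forall>x. Var L x \<le> B)"

definition FV :: "'a list set set" where
  "FV = {L. regular L \<and> finite_variation L}"

definition monoid_hom :: "('b list \<Rightarrow> 'a list) \<Rightarrow> bool" where
  "monoid_hom h \<longleftrightarrow> h [] = [] \<and> (\<forall>x y. h (x @ y) = h x @ h y)"

end

theory Submission
  imports Defs "HOL-Library.Sublist"
begin

text \<open>Each operation produces a language \<open>M\<close> whose quotient at \<open>u\<close> is a function of the
  quotient(s) of \<open>L\<close> at \<open>g u\<close>, where \<open>g\<close> is the identity, \<open>u \<mapsto> v @ u\<close> or the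
  homomorphism, and \<open>g\<close> preserves prefixes. Then \<open>M\<close> has at most as many quotients as \<open>L\<close>,
  and every state change of \<open>M\<close> along \<open>w\<close> is witnessed by a state change of \<open>L\<close> inside the
  corresponding segment of \<open>g w\<close>; distinct changes lie in disjoint segments, so
  \<open>Var M w \<le> Var L (g w)\<close>.\<close>

definition change_points :: "'a list set \<Rightarrow> 'a list \<Rightarrow> nat set" where
  "change_points L w =
     {k. k < length w \<and> min_state L (take k w) \<noteq> min_state L (take (Suc k) w)}"

lemma Var_eq_card_change_points: "Var L w = card (change_points L w)"
  by (simp add: Var_def change_points_def)

lemma finite_change_points: "finite (change_points L w)"
  unfolding change_points_def by (rule finite_subset[of _ "{..<length w}"]) auto

lemma change_point_between:
  assumes "i \<le> j" and "min_state L (take i x) \<noteq> min_state L (take j x)"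
  shows "\<exists>p. i \<le> p \<and> p < j \<and> min_state L (take p x) \<noteq> min_state L (take (Suc p) x)"
  using assms
proof (induction j rule: dec_induct)
  case base
  then show ?case by simp
next
  case (step j)
  then show ?case
    by (cases "min_state L (take i x) = min_state L (take j x)") (auto intro: less_SucI)
qed

lemma Var_le_Var_reindex:
  assumes mono: "mono \<phi>" and bound: "\<phi> (length w) \<le> length x"
    and transfer: "\<And>k. k < length w \<Longrightarrow>
      min_state L (take (\<phi> k) x) = min_state L (take (\<phi> (Suc k)) x) \<Longrightarrow>
      min_state M (take k w) = min_state M (take (Suc k) w)"
  shows "Var M w \<le> Var L x"
proof -
  have "\<exists>p. \<phi> k \<le> p \<and> p < \<phi> (Suc k) \<and> p \<in> change_points L x"
    if k: "k \<in> change_points M w" for k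
  proof -
    from k have kw: "k < length w"
      and "min_state M (take k w) \<noteq> min_state M (take (Suc k) w)"
      by (auto simp: change_points_def)
    then have "min_state L (take (\<phi> k) x) \<noteq> min_state L (take (\<phi> (Suc k)) x)"
      using transfer by blast
    moreover have "\<phi> k \<le> \<phi> (Suc k)"
      using mono by (simp add: monoD)
    ultimately obtain p where p: "\<phi> k \<le> p" "p < \<phi> (Suc k)"
      "min_state L (take p x) \<noteq> min_state L (take (Suc p) x)"
      using change_point_between by blast
    have "\<phi> (Suc k) \<le> length x"
      using monoD[OF mono, of "Suc k" "length w"] kw bound by simp
    with p show ?thesis by (auto simp: change_points_def)
  qed
  then obtain p where p: "\<And>k. k \<in> change_points M w \<Longrightarrow>
      \<phi> k \<le> p k \<and> p k < \<phi> (Suc k) \<and> p k \<in> change_points L x"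
    by metis
  have "p k < p k'" if "k \<in> change_points M w" "k' \<in> change_points M w" "k < k'" for k k'
  proof -
    have "\<phi> (Suc k) \<le> \<phi> k'"
      using mono that(3) by (simp add: monoD)
    then show ?thesis
      using p[OF that(1)] p[OF that(2)] by linarith
  qed
  then have "inj_on p (change_points M w)"
    by (intro inj_onI) (metis less_irrefl linorder_neqE_nat)
  moreover have "p ` change_points M w \<subseteq> change_points L x"
    using p by auto
  ultimately show ?thesis
    unfolding Var_eq_card_change_points by (simp add: card_inj_on_le finite_change_points)
qed

lemma Var_le_Var_prefix_map:
  assumes g: "\<And>u v. prefix (g u) (g (u @ v))"
    and M: "\<And>u. min_state M u = f (min_state L (g u))"
  shows "Var M w \<le> Var L (g w)"
proof -
  have take_g: "take (length (g (take k w))) (g w) = g (take k w)" for k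
    using g[of "take k w" "drop k w"] by (auto simp: prefix_def)
  have "mono (\<lambda>k. length (g (take k w)))"
  proof (rule monoI)
    fix k k' :: nat assume "k \<le> k'"
    then have "take k' w = take k w @ take (k' - k) (drop k w)"
      by (metis le_add_diff_inverse take_add)
    then show "length (g (take k w)) \<le> length (g (take k' w))"
      by (metis g prefix_length_le)
  qed
  then show ?thesis
    by (rule Var_le_Var_reindex) (simp_all add: take_g M)
qed

lemma Var_le_Var_add_Var:
  assumes "\<And>u. min_state M u = f (min_state L1 u) (min_state L2 u)"
  shows "Var M w \<le> Var L1 w + Var L2 w"
proof -
  have "change_points M w \<subseteq> change_points L1 w \<union> change_points L2 w"
    by (auto simp: change_points_def assms)
  then have "card (change_points M w) \<le> card (change_points L1 w \<union> change_points L2 w)"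
    by (simp add: card_mono finite_change_points)
  also have "\<dots> \<le> card (change_points L1 w) + card (change_points L2 w)"
    by (rule card_Un_le)
  finally show ?thesis
    by (simp add: Var_eq_card_change_points)
qed

lemma run_in_states:
  "q \<in> Q \<Longrightarrow> \<forall>q\<in>Q. \<forall>a. delta q a \<in> Q \<Longrightarrow> run delta q w \<in> Q"
  by (induction w arbitrary: q) (auto simp: run_def)

lemma run_append: "run delta q (u @ v) = run delta (run delta q u) v"
  by (simp add: run_def)

lemma regular_imp_finite_range_min_state:
  assumes "regular L"
  shows "finite (range (min_state L))"
proof -
  obtain Q :: "nat set" and delta q0 F where A: "finite Q" "q0 \<in> Q"
    "\<forall>q\<in>Q. \<forall>a. delta q a \<in> Q" "L = {w. run delta q0 w \<in> F}"
    using assms unfolding regular_def by blast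
  have "min_state L u = {x. run delta (run delta q0 u) x \<in> F}" for u
    using A(4) by (simp add: min_state_def run_append)
  then have "range (min_state L) \<subseteq> (\<lambda>q. {x. run delta q x \<in> F}) ` Q"
    using run_in_states[OF A(2,3)] by auto
  then show ?thesis
    using A(1) finite_surj by blast
qed

text \<open>Conversely, the quotients themselves, numbered injectively, form an automaton for \<open>L\<close>.\<close>

lemma finite_range_min_state_imp_regular:
  assumes fin: "finite (range (min_state L))"
  shows "regular L"
proof -
  define S where "S = range (min_state L)"
  obtain g :: "'a list set \<Rightarrow> nat" where g: "inj_on g S"
    using finite_imp_inj_to_nat_seg fin unfolding S_def by metis
  define delta where "delta n a = g {x. a # x \<in> inv_into S g n}" for n a
  have step: "delta (g (min_state L u)) a = g (min_state L (u @ [a]))" for u a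
    using g by (simp add: delta_def S_def min_state_def)
  have run_g: "run delta (g (min_state L u)) w = g (min_state L (u @ w))" for u w
  proof (induction w arbitrary: u)
    case Nil
    then show ?case by (simp add: run_def)
  next
    case (Cons a w)
    then show ?case
      using Cons.IH[of "u @ [a]"] by (simp add: run_def step)
  qed
  have accept: "g (min_state L w) \<in> g ` {X \<in> S. [] \<in> X} \<longleftrightarrow> w \<in> L" for w
  proof -
    have "g (min_state L w) \<in> g ` {X \<in> S. [] \<in> X} \<longleftrightarrow> min_state L w \<in> {X \<in> S. [] \<in> X}"
      using g by (intro inj_on_image_mem_iff) (auto simp: S_def)
    then show ?thesis
      by (simp add: S_def min_state_def)
  qed
  show ?thesis
    unfolding regular_def
  proof (intro exI conjI)
    show "finite (g ` S)" "g (min_state L []) \<in> g ` S" "g ` {X \<in> S. [] \<in> X} \<subseteq> g ` S"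
      using fin by (auto simp: S_def)
    show "\<forall>q\<in>g ` S. \<forall>a. delta q a \<in> g ` S"
      using step by (auto simp: S_def)
    show "L = {w. run delta (g (min_state L [])) w \<in> g ` {X \<in> S. [] \<in> X}}"
      using run_g[of "[]"] accept by auto
  qed
qed

lemma regular_iff_finite_range_min_state: "regular L \<longleftrightarrow> finite (range (min_state L))"
  using regular_imp_finite_range_min_state finite_range_min_state_imp_regular by blast

lemma FV_iff: "L \<in> FV \<longleftrightarrow> finite (range (min_state L)) \<and> (\<exists>B. \<forall>x. Var L x \<le> B)"
  by (simp add: FV_def regular_iff_finite_range_min_state finite_variation_def)

lemma FV_if_min_state_factors:
  assumes L: "L \<in> FV"
    and g: "\<And>u v. prefix (g u) (g (u @ v))"
    and M: "\<And>u. min_state M u = f (min_state L (g u))"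
  shows "M \<in> FV"
proof -
  obtain B where B: "\<And>x. Var L x \<le> B" and fin: "finite (range (min_state L))"
    using L by (auto simp: FV_iff)
  have "range (min_state M) \<subseteq> f ` range (min_state L)"
  proof
    fix X assume "X \<in> range (min_state M)"
    then obtain u where "X = min_state M u" by blast
    then show "X \<in> f ` range (min_state L)" by (simp add: M)
  qed
  then have "finite (range (min_state M))"
    using fin finite_surj by blast
  moreover have "Var M w \<le> B" for w
    using Var_le_Var_prefix_map[OF g M, of w] B[of "g w"] by linarith
  ultimately show ?thesis
    by (auto simp: FV_iff)
qed

lemma FV_if_min_state_factors2:
  assumes L1: "L1 \<in> FV" and L2: "L2 \<in> FV"
    and M: "\<And>u. min_state M u = f (min_state L1 u) (min_state L2 u)"
  shows "M \<in> FV"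
proof -
  obtain B1 B2 where B: "\<And>x. Var L1 x \<le> B1" "\<And>x. Var L2 x \<le> B2"
    and fin: "finite (range (min_state L1))" "finite (range (min_state L2))"
    using L1 L2 by (auto simp: FV_iff)
  have "range (min_state M) \<subseteq> case_prod f ` (range (min_state L1) \<times> range (min_state L2))"
  proof
    fix X assume "X \<in> range (min_state M)"
    then obtain u where "X = min_state M u" by blast
    then show "X \<in> case_prod f ` (range (min_state L1) \<times> range (min_state L2))"
      by (intro rev_image_eqI[of "(min_state L1 u, min_state L2 u)"]) (simp_all add: M)
  qed
  then have "finite (range (min_state M))"
    by (rule finite_surj[OF finite_cartesian_product[OF fin]])
  moreover have "Var M w \<le> B1 + B2" for w
    using Var_le_Var_add_Var[of M f L1 L2 w] M B[of w] by simp
  ultimately show ?thesis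
    by (auto simp: FV_iff)
qed

lemma FV_Un: "L1 \<in> FV \<Longrightarrow> L2 \<in> FV \<Longrightarrow> L1 \<union> L2 \<in> FV"
  by (rule FV_if_min_state_factors2[of L1 L2 _ "(\<union>)"]) (auto simp: min_state_def)

lemma FV_Int: "L1 \<in> FV \<Longrightarrow> L2 \<in> FV \<Longrightarrow> L1 \<inter> L2 \<in> FV"
  by (rule FV_if_min_state_factors2[of L1 L2 _ "(\<inter>)"]) (auto simp: min_state_def)

lemma FV_Compl: "L \<in> FV \<Longrightarrow> - L \<in> FV"
  by (rule FV_if_min_state_factors[of L id _ uminus]) (auto simp: min_state_def)

lemma FV_left_quotient: "L \<in> FV \<Longrightarrow> {x. v @ x \<in> L} \<in> FV"
  by (rule FV_if_min_state_factors[of L "(@) v" _ id]) (auto simp: min_state_def)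

lemma FV_right_quotient: "L \<in> FV \<Longrightarrow> {x. x @ v \<in> L} \<in> FV"
  by (rule FV_if_min_state_factors[of L id _ "\<lambda>X. {x. x @ v \<in> X}"]) (auto simp: min_state_def)

lemma FV_vimage_monoid_hom:
  assumes "monoid_hom h" and "L \<in> FV"
  shows "h -` L \<in> FV"
proof (rule FV_if_min_state_factors[of L h _ "vimage h"])
  show "prefix (h u) (h (u @ v))" for u v
    using assms(1) by (simp add: monoid_hom_def)
  show "min_state (h -` L) u = h -` min_state L (h u)" for u
    using assms(1) by (simp add: monoid_hom_def min_state_def)
qed (fact assms(2))

theorem mainTheorem1:
  shows "(\<forall>L1 \<in> (FV :: 'a::finite list set set). \<forall>L2 \<in> FV. L1 \<union> L2 \<in> FV \<and> L1 \<inter> L2 \<in> FV)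
       \<and> (\<forall>L \<in> (FV :: 'a list set set). - L \<in> FV)
       \<and> (\<forall>L \<in> (FV :: 'a list set set). \<forall>u. {x. u @ x \<in> L} \<in> FV \<and> {x. x @ u \<in> L} \<in> FV)
       \<and> (\<forall>h :: 'b::finite list \<Rightarrow> 'a list. monoid_hom h \<longrightarrow>
            (\<forall>L \<in> (FV :: 'a list set set). h -` L \<in> FV))"
  by (simp add: FV_Un FV_Int FV_Compl FV_left_quotient FV_right_quotient FV_vimage_monoid_hom)

end
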